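(* In any execution of Algorithm $\mathsf{AG}$ (described in the context) with a guild, there exist a process $p_i$ in the maximal guild and a quorum $Q_i\in\mathcal{Q}_i$ for $p_i$ such that every process in $Q_i$ receives a $\mathrm{DistributeS}$ message from $p_i$ before it sends a $\mathrm{DistributeT}$ message.
   Context: System model: a finite set $\mathcal{P}=\{p_1,\dots,p_n\}$ of processes communicating asynchronously over authenticated point-to-point links; every message sent from a correct process to a correct process is eventually delivered. A process that follows its protocol is correct; others (faulty, Byzantine) may behave arbitrarily. $F\subseteq\mathcal{P}$ denotes the (unknown) set of faulty processes of an execution. For $\mathcal{A}\subseteq 2^{\mathcal{P}}$, write $\mathcal{A}^*=\{A' : A'\subseteq A,\ A\in\mathcal{A}\}$. An asymmetric fail-prone system is an array $\mathbb{F}=[\mathcal{F}_1,\dots,\mathcal{F}_n]$ with $\mathcal{F}_i\subseteq 2^{\mathcal{P}}$. An asymmetric Byzantine quorum system for $\mathbb{F}$ is an array $\mathbb{Q}=[\mathcal{Q}_1,\dots,\mathcal{Q}_n]$ with $\mathcal{Q}_i\subseteq 2^{\mathcal{P}}$ (quorums for $p_i$) satisfying: (consistency) for all $i,j$, all $Q_i\in\mathcal{Q}_i$, $Q_j\in\mathcal{Q}_j$, $F_{ij}\in\mathcal{F}_i^*\cap\mathcal{F}_j^*$: $Q_i\cap Q_j\not\subseteq F_{ij}$; (availability) for all $i$ and $F_i\in\mathcal{F}_i$ there is $Q_i\in\mathcal{Q}_i$ with $F_i\cap Q_i=\emptyset$. A kernel for $p_i$ is a set $K\subseteq\mathcal{P}$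 intersecting every $Q\in\mathcal{Q}_i$; $\mathcal{K}_i$ is the set of kernels for $p_i$. A correct process $p_i$ is wise if $F\in\mathcal{F}_i^*$. A guild is a set $\mathcal{G}$ of wise processes such that every $p_i\in\mathcal{G}$ has some $Q_i\in\mathcal{Q}_i$ with $Q_i\subseteq\mathcal{G}$. An execution with a guild is one in which a nonempty guild exists; the maximal guild $\mathcal{G}_{max}$ is the union of all guilds. Asymmetric reliable broadcast (arb-broadcast / arb-deliver) guarantees, in every execution with a guild: if a correct process arb-broadcasts $m$, every process of $\mathcal{G}_{max}$ eventually arb-delivers $m$; for each sender, all processes of $\mathcal{G}_{max}$ that arb-deliver from it deliver the same message; if some process of $\mathcal{G}_{max}$ arb-delivers a message from a sender, all processes of $\mathcal{G}_{max}$ eventually arb-deliver a message from that sender; a correct process arb-delivers at most one message per sender, and from a correct sender only a message it arb-broadcast. Algorithm $\mathsf{AG}$ (code of $p_i$; each correct process invokes ag-propose$(x_i)$ exactly once; each guarded "upon there being ..." action executes at most once, message handlers once per message). State: sets $S_i,T_i,U_i$ initially empty, boolean $sentT$ initially false. (1) Upon ag-propose$(x_i)$: arb-broadcast $(p_i,x_i)$. (2) Upon arb-delivering $(p_j,x_j)$ from $p_j$: $S_i\gets S_i\cup\{(p_j,x_j)\}$. (3) Upon there being $Q\in\mathcal{Q}_i$ such that for every $p_j\in Q$ some pair $(p_j,\cdot)\in S_i$: send $\langle\mathrm{DistributeS},p_i,S_i\rangle$ to all. (4) For a received $\langle\mathrm{DistributeS},p_j,S_j\rangle$: once $S_j\subseteq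 S_i$, provided $sentT$ is false at that moment, set $T_i\gets T_i\cup S_j$ and send $\langle\mathrm{Ack},p_i\rangle$ to $p_j$. (5) Upon Ack received from every member of some $Q\in\mathcal{Q}_i$: send Ready to all. (6) Upon Ready received from every member of some $Q\in\mathcal{Q}_i$: send Confirm to all. (7) Upon Confirm received from every member of some $K\in\mathcal{K}_i$: send Confirm to all. (8) Upon Confirm received from every member of some $Q\in\mathcal{Q}_i$: send $\langle\mathrm{DistributeT},p_i,T_i\rangle$ to all and set $sentT\gets$ true. (9) For a received $\langle\mathrm{DistributeT},p_j,T_j\rangle$ from $p_j$: once $T_j\subseteq S_i$, set $U_i\gets U_i\cup T_j$. (10) Upon DistributeT received from every member of some $Q\in\mathcal{Q}_i$: ag-deliver$(U_i)$. *)

theory Defs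
  imports Main
begin

text \<open>A fail-prone system Fs assigns to each process p_i its family F_i,
  a quorum system Qs assigns to each process its family of quorums Q_i.\<close>

definition star :: "'p set set \<Rightarrow> 'p set set" where
  "star A = {A'. \<exists>B\<in>A. A' \<subseteq> B}"

definition asym_quorum_system :: "('p \<Rightarrow> 'p set set) \<Rightarrow> ('p \<Rightarrow> 'p set set) \<Rightarrow> bool" where
  "asym_quorum_system Fs Qs \<longleftrightarrow>
     (\<forall>i j. \<forall>Qi\<in>Qs i. \<forall>Qj\<in>Qs j. \<forall>Fij\<in>star (Fs i) \<inter> star (Fs j). \<not> (Qi \<inter> Qj \<subseteq> Fij)) \<and>
     (\<forall>i. \<forall>Fi\<in>Fs i. \<exists>Qi\<in>Qs i. Fi \<inter> Qi = {})"

definition is_kernel :: "('p \<Rightarrow> 'p set set) \<Rightarrow> 'p \<Rightarrow> 'p set \<Rightarrow> bool" where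
  "is_kernel Qs i K \<longleftrightarrow> (\<forall>Q\<in>Qs i. K \<inter> Q \<noteq> {})"

text \<open>F is the set of faulty processes of the execution.\<close>
definition wise :: "('p \<Rightarrow> 'p set set) \<Rightarrow> 'p set \<Rightarrow> 'p \<Rightarrow> bool" where
  "wise Fs F i \<longleftrightarrow> i \<notin> F \<and> F \<in> star (Fs i)"

definition is_guild :: "('p \<Rightarrow> 'p set set) \<Rightarrow> ('p \<Rightarrow> 'p set set) \<Rightarrow> 'p set \<Rightarrow> 'p set \<Rightarrow> bool" where
  "is_guild Fs Qs F G \<longleftrightarrow> (\<forall>i\<in>G. wise Fs F i) \<and> (\<forall>i\<in>G. \<exists>Q\<in>Qs i. Q \<subseteq> G)"

definition max_guild :: "('p \<Rightarrow> 'p set set) \<Rightarrow> ('p \<Rightarrow> 'p set set) \<Rightarrow> 'p set \<Rightarrow> 'p set" where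
  "max_guild Fs Qs F = \<Union> {G. is_guild Fs Qs F G}"

text \<open>The process identifier carried inside DistributeS / DistributeT / Ack messages
  is represented by the authenticated sender of the point-to-point link.\<close>
datatype ('p, 'v) msg =
    DistS "('p \<times> 'v) set"
  | Ack
  | Ready
  | Confirm
  | DistT "('p \<times> 'v) set"

text \<open>Propose p x: ag-propose(x) at correct p, immediately arb-broadcasting (p,x) (action 1).
  ArbDeliver q j d: q arb-delivers payload d from sender j (input to action 2).
  SendS, HandleS, SendReady, SendConfirmQ, SendConfirmK, SendDistT, HandleT, AgDeliver:
  actions 3, 4, 5, 6, 7, 8, 9, 10 of correct processes.\<close>
datatype ('p, 'v) event =
    Idle
  | Propose 'p 'v
  | ArbDeliver 'p 'p "'p \<times> 'v"
  | Recv 'p 'p "('p, 'v) msg"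
  | SendS 'p
  | HandleS 'p 'p "('p \<times> 'v) set"
  | SendReady 'p
  | SendConfirmQ 'p
  | SendConfirmK 'p
  | SendDistT 'p
  | HandleT 'p 'p "('p \<times> 'v) set"
  | AgDeliver 'p "('p \<times> 'v) set"
  | FaultySend 'p 'p "('p, 'v) msg"

record ('p, 'v) lstate =
  st_S :: "('p \<times> 'v) set"
  st_T :: "('p \<times> 'v) set"
  st_U :: "('p \<times> 'v) set"
  st_sentT :: bool
  st_proposed :: bool
  st_sentS :: bool
  st_sentReady :: bool
  st_conf6 :: bool
  st_conf7 :: bool
  st_delivered :: bool
  st_rcv :: "('p \<times> ('p, 'v) msg) set"      (* messages received so far, with sender *)
  st_pendS :: "('p \<times> ('p \<times> 'v) set) set"
  st_pendT :: "('p \<times> ('p \<times> 'v) set) set"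

record ('p, 'v) config =
  cf_ls :: "'p \<Rightarrow> ('p, 'v) lstate"
  cf_sent :: "('p \<times> 'p \<times> ('p, 'v) msg) set"   (* (sender, receiver, message) ever sent *)
  cf_arbB :: "('p \<times> ('p \<times> 'v)) set"          (* (sender, payload) ever arb-broadcast *)

definition init_lstate :: "('p, 'v) lstate" where
  "init_lstate = \<lparr> st_S = {}, st_T = {}, st_U = {}, st_sentT = False, st_proposed = False,
     st_sentS = False, st_sentReady = False, st_conf6 = False, st_conf7 = False,
     st_delivered = False, st_rcv = {}, st_pendS = {}, st_pendT = {} \<rparr>"

definition init_config :: "('p, 'v) config" where
  "init_config = \<lparr> cf_ls = (\<lambda>_. init_lstate), cf_sent = {}, cf_arbB = {} \<rparr>"

definition upd_ls :: "'p \<Rightarrow> (('p,'v) lstate \<Rightarrow> ('p,'v) lstate) \<Rightarrow> ('p,'v) config \<Rightarrow> ('p,'v) config" where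
  "upd_ls p f c = c\<lparr> cf_ls := (cf_ls c)(p := f (cf_ls c p)) \<rparr>"

definition send_all :: "'p \<Rightarrow> ('p,'v) msg \<Rightarrow> ('p,'v) config \<Rightarrow> ('p,'v) config" where
  "send_all p m c = c\<lparr> cf_sent := cf_sent c \<union> {(p, q, m) | q. True} \<rparr>"

definition send_to :: "'p \<Rightarrow> 'p \<Rightarrow> ('p,'v) msg \<Rightarrow> ('p,'v) config \<Rightarrow> ('p,'v) config" where
  "send_to p q m c = c\<lparr> cf_sent := insert (p, q, m) (cf_sent c) \<rparr>"

definition ag_step :: "('p \<Rightarrow> 'p set set) \<Rightarrow> 'p set \<Rightarrow> ('p,'v) config \<Rightarrow> ('p,'v) event \<Rightarrow> ('p,'v) config \<Rightarrow> bool" where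
  "ag_step Qs F c e c' = (case e of
     Idle \<Rightarrow> c' = c
   | Propose p x \<Rightarrow> p \<notin> F \<and> \<not> st_proposed (cf_ls c p) \<and>
        c' = (upd_ls p (\<lambda>s. s\<lparr> st_proposed := True \<rparr>) c)\<lparr> cf_arbB := insert (p, (p, x)) (cf_arbB c) \<rparr>
   | ArbDeliver p j d \<Rightarrow> p \<notin> F \<and>
        c' = upd_ls p (\<lambda>s. if fst d = j then s\<lparr> st_S := insert d (st_S s) \<rparr> else s) c
   | Recv p j m \<Rightarrow> p \<notin> F \<and> (j, p, m) \<in> cf_sent c \<and> (j, m) \<notin> st_rcv (cf_ls c p) \<and>
        c' = upd_ls p (\<lambda>s. s\<lparr> st_rcv := insert (j, m) (st_rcv s),
                            st_pendS := (case m of DistS X \<Rightarrow> insert (j, X) (st_pendS s) | _ \<Rightarrow> st_pendS s),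
                            st_pendT := (case m of DistT X \<Rightarrow> insert (j, X) (st_pendT s) | _ \<Rightarrow> st_pendT s) \<rparr>) c
   | SendS p \<Rightarrow> p \<notin> F \<and> \<not> st_sentS (cf_ls c p) \<and>
        (\<exists>Q\<in>Qs p. \<forall>j\<in>Q. \<exists>x. (j, x) \<in> st_S (cf_ls c p)) \<and>
        c' = send_all p (DistS (st_S (cf_ls c p))) (upd_ls p (\<lambda>s. s\<lparr> st_sentS := True \<rparr>) c)
   | HandleS p j X \<Rightarrow> p \<notin> F \<and> (j, X) \<in> st_pendS (cf_ls c p) \<and> X \<subseteq> st_S (cf_ls c p) \<and>
        c' = (if st_sentT (cf_ls c p)
              then upd_ls p (\<lambda>s. s\<lparr> st_pendS := st_pendS s - {(j, X)} \<rparr>) c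
              else send_to p j Ack
                     (upd_ls p (\<lambda>s. s\<lparr> st_pendS := st_pendS s - {(j, X)}, st_T := st_T s \<union> X \<rparr>) c))
   | SendReady p \<Rightarrow> p \<notin> F \<and> \<not> st_sentReady (cf_ls c p) \<and>
        (\<exists>Q\<in>Qs p. \<forall>j\<in>Q. (j, Ack) \<in> st_rcv (cf_ls c p)) \<and>
        c' = send_all p Ready (upd_ls p (\<lambda>s. s\<lparr> st_sentReady := True \<rparr>) c)
   | SendConfirmQ p \<Rightarrow> p \<notin> F \<and> \<not> st_conf6 (cf_ls c p) \<and>
        (\<exists>Q\<in>Qs p. \<forall>j\<in>Q. (j, Ready) \<in> st_rcv (cf_ls c p)) \<and>
        c' = send_all p Confirm (upd_ls p (\<lambda>s. s\<lparr> st_conf6 := True \<rparr>) c)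
   | SendConfirmK p \<Rightarrow> p \<notin> F \<and> \<not> st_conf7 (cf_ls c p) \<and>
        (\<exists>K. is_kernel Qs p K \<and> (\<forall>j\<in>K. (j, Confirm) \<in> st_rcv (cf_ls c p))) \<and>
        c' = send_all p Confirm (upd_ls p (\<lambda>s. s\<lparr> st_conf7 := True \<rparr>) c)
   | SendDistT p \<Rightarrow> p \<notin> F \<and> \<not> st_sentT (cf_ls c p) \<and>
        (\<exists>Q\<in>Qs p. \<forall>j\<in>Q. (j, Confirm) \<in> st_rcv (cf_ls c p)) \<and>
        c' = send_all p (DistT (st_T (cf_ls c p))) (upd_ls p (\<lambda>s. s\<lparr> st_sentT := True \<rparr>) c)
   | HandleT p j X \<Rightarrow> p \<notin> F \<and> (j, X) \<in> st_pendT (cf_ls c p) \<and> X \<subseteq> st_S (cf_ls c p) \<and>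
        c' = upd_ls p (\<lambda>s. s\<lparr> st_pendT := st_pendT s - {(j, X)}, st_U := st_U s \<union> X \<rparr>) c
   | AgDeliver p V \<Rightarrow> p \<notin> F \<and> \<not> st_delivered (cf_ls c p) \<and>
        (\<exists>Q\<in>Qs p. \<forall>j\<in>Q. \<exists>X. (j, DistT X) \<in> st_rcv (cf_ls c p)) \<and>
        V = st_U (cf_ls c p) \<and>
        c' = upd_ls p (\<lambda>s. s\<lparr> st_delivered := True \<rparr>) c
   | FaultySend j q m \<Rightarrow> j \<in> F \<and> c' = send_to j q m c)"

definition local_action :: "'p \<Rightarrow> ('p,'v) event \<Rightarrow> bool" where
  "local_action p e \<longleftrightarrow> e = SendS p \<or> (\<exists>j X. e = HandleS p j X) \<or> e = SendReady p \<or>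
     e = SendConfirmQ p \<or> e = SendConfirmK p \<or> e = SendDistT p \<or> (\<exists>j X. e = HandleT p j X) \<or>
     (\<exists>V. e = AgDeliver p V)"

definition same_action :: "('p,'v) event \<Rightarrow> ('p,'v) event \<Rightarrow> bool" where
  "same_action e e' \<longleftrightarrow> (case e of AgDeliver p V \<Rightarrow> (\<exists>V'. e' = AgDeliver p V') | _ \<Rightarrow> e' = e)"

definition ag_execution :: "('p \<Rightarrow> 'p set set) \<Rightarrow> ('p \<Rightarrow> 'p set set) \<Rightarrow> 'p set
    \<Rightarrow> (nat \<Rightarrow> ('p,'v) event) \<Rightarrow> (nat \<Rightarrow> ('p,'v) config) \<Rightarrow> bool" where
  "ag_execution Fs Qs F tr cs \<longleftrightarrow>
     cs 0 = init_config \<and>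
     (\<forall>t. ag_step Qs F (cs t) (tr t) (cs (Suc t))) \<and>
     \<comment> \<open>every correct process invokes ag-propose\<close>
     (\<forall>p. p \<notin> F \<longrightarrow> (\<exists>t x. tr t = Propose p x)) \<and>
     \<comment> \<open>reliable links between correct processes\<close>
     (\<forall>t j p m. j \<notin> F \<longrightarrow> p \<notin> F \<longrightarrow> (j, p, m) \<in> cf_sent (cs t) \<longrightarrow> (\<exists>t'. tr t' = Recv p j m)) \<and>
     \<comment> \<open>weak fairness of enabled actions of correct processes\<close>
     (\<forall>t p e. p \<notin> F \<longrightarrow> local_action p e \<longrightarrow> (\<exists>c'. ag_step Qs F (cs t) e c') \<longrightarrow>
        (\<exists>t'\<ge>t. same_action e (tr t'))) \<and>
     \<comment> \<open>arb-broadcast: validity\<close>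
     (\<forall>t j d. j \<notin> F \<longrightarrow> (j, d) \<in> cf_arbB (cs t) \<longrightarrow>
        (\<forall>p\<in>max_guild Fs Qs F. \<exists>t'. tr t' = ArbDeliver p j d)) \<and>
     \<comment> \<open>arb-broadcast: consistency\<close>
     (\<forall>t t' p q j d d'. p \<in> max_guild Fs Qs F \<longrightarrow> q \<in> max_guild Fs Qs F \<longrightarrow>
        tr t = ArbDeliver p j d \<longrightarrow> tr t' = ArbDeliver q j d' \<longrightarrow> d = d') \<and>
     \<comment> \<open>arb-broadcast: totality\<close>
     (\<forall>t p j d. p \<in> max_guild Fs Qs F \<longrightarrow> tr t = ArbDeliver p j d \<longrightarrow>
        (\<forall>q\<in>max_guild Fs Qs F. \<exists>t' d'. tr t' = ArbDeliver q j d')) \<and>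
     \<comment> \<open>arb-broadcast: no duplication\<close>
     (\<forall>t t' p j d d'. p \<notin> F \<longrightarrow> tr t = ArbDeliver p j d \<longrightarrow> tr t' = ArbDeliver p j d' \<longrightarrow> t = t') \<and>
     \<comment> \<open>arb-broadcast: integrity\<close>
     (\<forall>t p j d. p \<notin> F \<longrightarrow> j \<notin> F \<longrightarrow> tr t = ArbDeliver p j d \<longrightarrow> (j, d) \<in> cf_arbB (cs t))"

end

theory Submission
  imports Defs
begin

text \<open>Split on whether some member of the maximal guild ever sends DistributeT. If none does,
  the ordering requirement is vacuous for a quorum inside the guild, and it suffices that its
  owner i sends DistributeS at all: by validity of arb-broadcast, i eventually holds values from
  the whole quorum, so action 3 becomes enabled and fires by fairness.
  Otherwise some guild member sends Confirm. Following Confirms received from kernels backwards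
  in time, which stays inside the guild because kernels meet guild quorums, one reaches a guild
  member h that confirmed on a quorum of Readys. By consistency this quorum contains a guild
  member r, whose Ready was triggered by a quorum of Acks; a correct process acknowledges a
  DistributeS from r only while it has not yet sent DistributeT.\<close>

definition receives_DistS_before_DistT :: "(nat \<Rightarrow> ('p, 'v) event) \<Rightarrow> 'p \<Rightarrow> 'p \<Rightarrow> bool" where
  "receives_DistS_before_DistT tr i q \<longleftrightarrow>
     (\<exists>t X. tr t = Recv q i (DistS X) \<and> (\<forall>t'. tr t' = SendDistT q \<longrightarrow> t < t'))"

definition sending_event :: "'p \<Rightarrow> 'p \<Rightarrow> ('p, 'v) msg \<Rightarrow> ('p, 'v) event \<Rightarrow> ('p, 'v) config \<Rightarrow> bool" where
  "sending_event j p m e c \<longleftrightarrow> (case m of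
       DistS X \<Rightarrow> e = SendS j
     | Ack \<Rightarrow> (\<exists>X. e = HandleS j p X \<and> \<not> st_sentT (cf_ls c j))
     | Ready \<Rightarrow> e = SendReady j
     | Confirm \<Rightarrow> e = SendConfirmQ j \<or> e = SendConfirmK j
     | DistT X \<Rightarrow> e = SendDistT j)"

lemma guild_subset_max_guild: "is_guild Fs Qs F G \<Longrightarrow> G \<subseteq> max_guild Fs Qs F"
  by (auto simp: max_guild_def)

lemma is_guild_max_guild: "is_guild Fs Qs F (max_guild Fs Qs F)"
proof -
  have "wise Fs F i \<and> (\<exists>Q\<in>Qs i. Q \<subseteq> max_guild Fs Qs F)" if "i \<in> max_guild Fs Qs F" for i
  proof -
    from that obtain G where G: "is_guild Fs Qs F G" "i \<in> G"
      unfolding max_guild_def by blast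
    then have "wise Fs F i" "\<exists>Q\<in>Qs i. Q \<subseteq> G"
      unfolding is_guild_def by blast+
    with guild_subset_max_guild[OF G(1)] show ?thesis
      by blast
  qed
  then show ?thesis by (simp add: is_guild_def)
qed

lemma guild_disjoint_faulty: "is_guild Fs Qs F G \<Longrightarrow> G \<inter> F = {}"
  unfolding is_guild_def wise_def by blast

lemma max_guild_disjoint_faulty: "max_guild Fs Qs F \<inter> F = {}"
  by (rule guild_disjoint_faulty[OF is_guild_max_guild])

lemma guild_quorum_meets_guild:
  assumes "asym_quorum_system Fs Qs" "is_guild Fs Qs F G" "h \<in> G" "Q \<in> Qs h"
  shows "Q \<inter> G \<noteq> {}"
proof -
  obtain Q' where Q': "Q' \<in> Qs h" "Q' \<subseteq> G"
    using assms(2,3) unfolding is_guild_def by blast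
  have "F \<in> star (Fs h)"
    using assms(2,3) unfolding is_guild_def wise_def by blast
  then have "\<not> Q \<inter> Q' \<subseteq> F"
    using assms(1,4) Q'(1) unfolding asym_quorum_system_def by blast
  then show ?thesis
    using Q'(2) guild_disjoint_faulty[OF assms(2)] by blast
qed

lemma guild_kernel_meets_guild:
  assumes "is_guild Fs Qs F G" "h \<in> G" "is_kernel Qs h K"
  shows "K \<inter> G \<noteq> {}"
proof -
  obtain Q where "Q \<in> Qs h" "Q \<subseteq> G"
    using assms(1,2) unfolding is_guild_def by blast
  then show ?thesis
    using assms(3) unfolding is_kernel_def by blast
qed

lemma step_sent_mono: "ag_step Qs F c e c' \<Longrightarrow> cf_sent c \<subseteq> cf_sent c'"
  by (cases e) (auto simp: ag_step_def upd_ls_def send_all_def send_to_def split: if_splits)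

lemma step_sent_new:
  "ag_step Qs F c e c' \<Longrightarrow> (j, p, m) \<in> cf_sent c' \<Longrightarrow> (j, p, m) \<notin> cf_sent c \<Longrightarrow> j \<notin> F
    \<Longrightarrow> sending_event j p m e c"
  by (cases e)
    (auto simp: ag_step_def upd_ls_def send_all_def send_to_def sending_event_def split: if_splits)

lemma step_rcv:
  "ag_step Qs F c e c' \<Longrightarrow> (j, m) \<in> st_rcv (cf_ls c' p) \<Longrightarrow>
    (j, m) \<in> st_rcv (cf_ls c p) \<or> (j, p, m) \<in> cf_sent c"
  by (cases e) (auto simp: ag_step_def upd_ls_def send_all_def send_to_def split: if_splits)

lemma step_pendS:
  "ag_step Qs F c e c' \<Longrightarrow> (j, X) \<in> st_pendS (cf_ls c' p) \<Longrightarrow>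
    (j, X) \<in> st_pendS (cf_ls c p) \<or> e = Recv p j (DistS X)"
  by (cases e)
    (auto simp: ag_step_def upd_ls_def send_all_def send_to_def split: if_splits msg.splits)

lemma step_sentT_mono: "ag_step Qs F c e c' \<Longrightarrow> st_sentT (cf_ls c p) \<Longrightarrow> st_sentT (cf_ls c' p)"
  by (cases e) (auto simp: ag_step_def upd_ls_def send_all_def send_to_def split: if_splits)

lemma step_S_mono: "ag_step Qs F c e c' \<Longrightarrow> st_S (cf_ls c p) \<subseteq> st_S (cf_ls c' p)"
  by (cases e) (auto simp: ag_step_def upd_ls_def send_all_def send_to_def split: if_splits)

lemma step_sentS:
  "ag_step Qs F c e c' \<Longrightarrow> st_sentS (cf_ls c' p) \<Longrightarrow>
    st_sentS (cf_ls c p) \<or> (\<forall>q. (p, q, DistS (st_S (cf_ls c p))) \<in> cf_sent c')"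
  by (cases e) (auto simp: ag_step_def upd_ls_def send_all_def send_to_def split: if_splits)

locale ag_run =
  fixes Qs :: "'p \<Rightarrow> 'p set set" and F :: "'p set"
    and tr :: "nat \<Rightarrow> ('p, 'v) event" and cs :: "nat \<Rightarrow> ('p, 'v) config"
  assumes init: "cs 0 = init_config"
    and steps: "\<And>t. ag_step Qs F (cs t) (tr t) (cs (Suc t))"
begin

lemma step_event: "tr t = e \<Longrightarrow> ag_step Qs F (cs t) e (cs (Suc t))"
  using steps[of t] by simp

lemma sentT_mono: "t \<le> t' \<Longrightarrow> st_sentT (cf_ls (cs t) p) \<Longrightarrow> st_sentT (cf_ls (cs t') p)"
  by (induction t' rule: dec_induct) (auto intro: step_sentT_mono[OF steps])

lemma S_mono: "t \<le> t' \<Longrightarrow> st_S (cf_ls (cs t) p) \<subseteq> st_S (cf_ls (cs t') p)"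
  by (rule lift_Suc_mono_le[of "\<lambda>t. st_S (cf_ls (cs t) p)"]) (use step_S_mono[OF steps] in blast)

lemma sent_origin:
  "(j, p, m) \<in> cf_sent (cs t) \<Longrightarrow> j \<notin> F \<Longrightarrow> \<exists>t'<t. sending_event j p m (tr t') (cs t')"
proof (induction t)
  case 0
  then show ?case by (simp add: init init_config_def)
next
  case (Suc t)
  show ?case
  proof (cases "(j, p, m) \<in> cf_sent (cs t)")
    case True
    then show ?thesis using Suc by (meson less_SucI)
  next
    case False
    then show ?thesis using step_sent_new[OF steps Suc.prems(1) False Suc.prems(2)] by blast
  qed
qed

lemma rcv_sent: "(j, m) \<in> st_rcv (cf_ls (cs t) p) \<Longrightarrow> (j, p, m) \<in> cf_sent (cs t)"
proof (induction t)
  case 0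
  then show ?case by (simp add: init init_config_def init_lstate_def)
next
  case (Suc t)
  then show ?case using step_rcv[OF steps Suc.prems] step_sent_mono[OF steps] by blast
qed

lemma received_origin:
  "(j, m) \<in> st_rcv (cf_ls (cs t) p) \<Longrightarrow> j \<notin> F \<Longrightarrow> \<exists>t'<t. sending_event j p m (tr t') (cs t')"
  using sent_origin rcv_sent by blast

lemma pendS_received: "(j, X) \<in> st_pendS (cf_ls (cs t) p) \<Longrightarrow> \<exists>t'<t. tr t' = Recv p j (DistS X)"
proof (induction t)
  case 0
  then show ?case by (simp add: init init_config_def init_lstate_def)
next
  case (Suc t)
  then show ?case using step_pendS[OF steps Suc.prems] by (meson less_SucI lessI)
qed

lemma sentS_sent_DistS: "st_sentS (cf_ls (cs t) p) \<Longrightarrow> \<exists>X. \<forall>q. (p, q, DistS X) \<in> cf_sent (cs t)"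
proof (induction t)
  case 0
  then show ?case by (simp add: init init_config_def init_lstate_def)
next
  case (Suc t)
  then show ?case using step_sentS[OF steps Suc.prems] step_sent_mono[OF steps] by blast
qed

lemma Ack_received_before_DistT:
  assumes "(q, Ack) \<in> st_rcv (cf_ls (cs t) r)" "q \<notin> F"
  shows "receives_DistS_before_DistT tr r q"
proof -
  obtain ta X where ta: "tr ta = HandleS q r X" "\<not> st_sentT (cf_ls (cs ta) q)"
    using received_origin[OF assms] by (auto simp: sending_event_def)
  then have "(r, X) \<in> st_pendS (cf_ls (cs ta) q)"
    using step_event[OF ta(1)] by (auto simp: ag_step_def)
  then obtain t where t: "t < ta" "tr t = Recv q r (DistS X)"
    using pendS_received by blast
  have "ta < t'" if "tr t' = SendDistT q" for t'
  proof (rule ccontr)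
    assume "\<not> ta < t'"
    moreover have "t' \<noteq> ta" using that ta(1) by auto
    moreover have "st_sentT (cf_ls (cs (Suc t')) q)"
      using step_event[OF that] by (auto simp: ag_step_def upd_ls_def send_all_def)
    ultimately show False using sentT_mono[of "Suc t'" ta] ta(2) by simp
  qed
  then show ?thesis
    using t unfolding receives_DistS_before_DistT_def by (meson order.strict_trans)
qed

lemma guild_SendConfirmQ_of_SendConfirm:
  assumes "is_guild Fs Qs F G" "h \<in> G" "tr t = SendConfirmQ h \<or> tr t = SendConfirmK h"
  shows "\<exists>h'\<in>G. \<exists>t'. tr t' = SendConfirmQ h'"
  using assms(2,3)
proof (induction t arbitrary: h rule: less_induct)
  case (less t)
  show ?case
  proof (cases "tr t = SendConfirmQ h")
    case True
    with less.prems show ?thesis by blast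
  next
    case False
    with less.prems have "tr t = SendConfirmK h" by blast
    from step_event[OF this] obtain K
      where K: "is_kernel Qs h K" "\<forall>j\<in>K. (j, Confirm) \<in> st_rcv (cf_ls (cs t) h)"
      by (auto simp: ag_step_def)
    obtain j where j: "j \<in> K" "j \<in> G"
      using guild_kernel_meets_guild[OF assms(1) less.prems(1) K(1)] by blast
    then obtain t' where "t' < t" "sending_event j h Confirm (tr t') (cs t')"
      using received_origin K(2) guild_disjoint_faulty[OF assms(1)] by blast
    then show ?thesis
      using less.IH j(2) by (auto simp: sending_event_def)
  qed
qed

lemma DistS_quorum_of_guild_SendDistT:
  assumes "asym_quorum_system Fs Qs" "is_guild Fs Qs F G" "g \<in> G" "tr s = SendDistT g"
  shows "\<exists>r\<in>G. \<exists>Qr\<in>Qs r. \<forall>q\<in>Qr. q \<notin> F \<longrightarrow> receives_DistS_before_DistT tr r q"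
proof -
  have correct: "j \<notin> F" if "j \<in> G" for j
    using guild_disjoint_faulty[OF assms(2)] that by blast
  obtain Q where Q: "Q \<in> Qs g" "\<forall>j\<in>Q. (j, Confirm) \<in> st_rcv (cf_ls (cs s) g)"
    using step_event[OF assms(4)] by (auto simp: ag_step_def)
  obtain j where "j \<in> Q" "j \<in> G"
    using guild_quorum_meets_guild[OF assms(1,2,3) Q(1)] by blast
  then obtain t where "tr t = SendConfirmQ j \<or> tr t = SendConfirmK j"
    using received_origin Q(2) correct by (fastforce simp: sending_event_def)
  then obtain h t' where h: "h \<in> G" "tr t' = SendConfirmQ h"
    using guild_SendConfirmQ_of_SendConfirm[OF assms(2) \<open>j \<in> G\<close>] by blast
  obtain QR where QR: "QR \<in> Qs h" "\<forall>j\<in>QR. (j, Ready) \<in> st_rcv (cf_ls (cs t') h)"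
    using step_event[OF h(2)] by (auto simp: ag_step_def)
  obtain r where r: "r \<in> QR" "r \<in> G"
    using guild_quorum_meets_guild[OF assms(1,2) h(1) QR(1)] by blast
  then obtain t'' where "tr t'' = SendReady r"
    using received_origin QR(2) correct by (fastforce simp: sending_event_def)
  from step_event[OF this] obtain Qr
    where "Qr \<in> Qs r" "\<forall>q\<in>Qr. (q, Ack) \<in> st_rcv (cf_ls (cs t'') r)"
    by (auto simp: ag_step_def)
  then show ?thesis
    using r(2) Ack_received_before_DistT by blast
qed

end

locale ag_exec =
  fixes Fs Qs :: "'p \<Rightarrow> 'p set set" and F :: "'p set"
    and tr :: "nat \<Rightarrow> ('p, 'v) event" and cs :: "nat \<Rightarrow> ('p, 'v) config"
  assumes exec: "ag_execution Fs Qs F tr cs"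

sublocale ag_exec \<subseteq> ag_run Qs F tr cs
  using exec by unfold_locales (auto simp: ag_execution_def)

context ag_exec
begin

lemma correct_proposes: "p \<notin> F \<Longrightarrow> \<exists>t x. tr t = Propose p x"
  using exec unfolding ag_execution_def by (elim conjE) blast

lemma reliable_links: "j \<notin> F \<Longrightarrow> p \<notin> F \<Longrightarrow> (j, p, m) \<in> cf_sent (cs t) \<Longrightarrow> \<exists>t'. tr t' = Recv p j m"
  using exec unfolding ag_execution_def by (elim conjE) blast

lemma weak_fairness:
  "p \<notin> F \<Longrightarrow> local_action p e \<Longrightarrow> ag_step Qs F (cs t) e c' \<Longrightarrow> \<exists>t'\<ge>t. same_action e (tr t')"
  using exec unfolding ag_execution_def by (elim conjE) blast

lemma arb_validity:
  "j \<notin> F \<Longrightarrow> (j, d) \<in> cf_arbB (cs t) \<Longrightarrow> p \<in> max_guild Fs Qs F \<Longrightarrow> \<exists>t'. tr t' = ArbDeliver p j d"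
  using exec unfolding ag_execution_def by (elim conjE) blast

lemma max_guild_receives_proposal:
  assumes "j \<notin> F" "i \<in> max_guild Fs Qs F"
  shows "\<exists>t x. (j, x) \<in> st_S (cf_ls (cs t) i)"
proof -
  obtain tp x where "tr tp = Propose j x"
    using correct_proposes[OF assms(1)] by blast
  from step_event[OF this] have "(j, (j, x)) \<in> cf_arbB (cs (Suc tp))"
    by (auto simp: ag_step_def upd_ls_def)
  then obtain td where "tr td = ArbDeliver i j (j, x)"
    using arb_validity[OF assms(1) _ assms(2)] by blast
  from step_event[OF this] have "(j, x) \<in> st_S (cf_ls (cs (Suc td)) i)"
    by (auto simp: ag_step_def upd_ls_def)
  then show ?thesis by blast
qed

lemma max_guild_sends_DistS:
  assumes "i \<in> max_guild Fs Qs F" "Q \<in> Qs i" "finite Q" "Q \<inter> F = {}"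
  shows "\<exists>t X. \<forall>q. (i, q, DistS X) \<in> cf_sent (cs t)"
proof -
  have eventually_S: "eventually (\<lambda>t. \<exists>x. (j, x) \<in> st_S (cf_ls (cs t) i)) sequentially"
    if j: "j \<in> Q" for j
  proof -
    have "j \<notin> F" using assms(4) j by blast
    then obtain t0 x where x: "(j, x) \<in> st_S (cf_ls (cs t0) i)"
      using max_guild_receives_proposal[OF _ assms(1)] by blast
    show ?thesis
    proof (rule eventually_sequentiallyI[of t0])
      fix t assume "t0 \<le> t"
      with x show "\<exists>x. (j, x) \<in> st_S (cf_ls (cs t) i)"
        using S_mono by blast
    qed
  qed
  have "eventually (\<lambda>t. \<forall>j\<in>Q. \<exists>x. (j, x) \<in> st_S (cf_ls (cs t) i)) sequentially"
    using eventually_ball_finite[OF assms(3), where P = "\<lambda>t j. \<exists>x. (j, x) \<in> st_S (cf_ls (cs t) i)"]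
      eventually_S by simp
  then obtain T where "\<forall>t\<ge>T. \<forall>j\<in>Q. \<exists>x. (j, x) \<in> st_S (cf_ls (cs t) i)"
    unfolding eventually_sequentially ..
  then have T: "\<forall>j\<in>Q. \<exists>x. (j, x) \<in> st_S (cf_ls (cs T) i)"
    by blast
  have i_correct: "i \<notin> F"
    using max_guild_disjoint_faulty[of Fs Qs F] assms(1) by blast
  show ?thesis
  proof (cases "st_sentS (cf_ls (cs T) i)")
    case True
    then show ?thesis using sentS_sent_DistS by blast
  next
    case False
    have "ag_step Qs F (cs T) (SendS i)
            (send_all i (DistS (st_S (cf_ls (cs T) i))) (upd_ls i (\<lambda>s. s\<lparr>st_sentS := True\<rparr>) (cs T)))"
      using False T assms(2) i_correct by (auto simp: ag_step_def)
    then obtain t' where "tr t' = SendS i"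
      using weak_fairness[OF i_correct] by (fastforce simp: local_action_def same_action_def)
    from step_event[OF this] have "\<forall>q. (i, q, DistS (st_S (cf_ls (cs t') i))) \<in> cf_sent (cs (Suc t'))"
      by (auto simp: ag_step_def send_all_def upd_ls_def)
    then show ?thesis by blast
  qed
qed

lemma receives_DistS_from_max_guild:
  assumes "i \<in> max_guild Fs Qs F" "Q \<in> Qs i" "Q \<subseteq> max_guild Fs Qs F" "finite Q"
    and "q \<in> Q" "\<forall>t. tr t \<noteq> SendDistT q"
  shows "receives_DistS_before_DistT tr i q"
proof -
  have "i \<notin> F" "q \<notin> F" "Q \<inter> F = {}"
    using assms(1,3,5) max_guild_disjoint_faulty[of Fs Qs F] by blast+
  moreover obtain t X where "\<forall>q. (i, q, DistS X) \<in> cf_sent (cs t)"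
    using max_guild_sends_DistS[OF assms(1,2,4)] calculation(3) by blast
  ultimately obtain t' where "tr t' = Recv q i (DistS X)"
    using reliable_links by blast
  with assms(6) show ?thesis
    unfolding receives_DistS_before_DistT_def by blast
qed

end

theorem lemma3p5:
  fixes Fs Qs :: "'p::finite \<Rightarrow> 'p set set"
    and F :: "'p set"
    and tr :: "nat \<Rightarrow> ('p, 'v) event"
    and cs :: "nat \<Rightarrow> ('p, 'v) config"
  assumes "asym_quorum_system Fs Qs"
    and "ag_execution Fs Qs F tr cs"
    and "\<exists>G. G \<noteq> {} \<and> is_guild Fs Qs F G"
  shows "\<exists>i\<in>max_guild Fs Qs F. \<exists>Qi\<in>Qs i. \<forall>q\<in>Qi. q \<notin> F \<longrightarrow>
           (\<exists>t X. tr t = Recv q i (DistS X) \<and> (\<forall>t'. tr t' = SendDistT q \<longrightarrow> t < t'))"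
proof -
  interpret ag_exec Fs Qs F tr cs by (rule ag_exec.intro) (rule assms(2))
  let ?M = "max_guild Fs Qs F"
  have M: "is_guild Fs Qs F ?M" by (rule is_guild_max_guild)
  obtain i where i: "i \<in> ?M"
    using assms(3) guild_subset_max_guild by blast
  then obtain Qi where Qi: "Qi \<in> Qs i" "Qi \<subseteq> ?M"
    using M unfolding is_guild_def by blast
  have "\<exists>i\<in>?M. \<exists>Qi\<in>Qs i. \<forall>q\<in>Qi. q \<notin> F \<longrightarrow> receives_DistS_before_DistT tr i q"
  proof (cases "\<exists>g\<in>?M. \<exists>s. tr s = SendDistT g")
    case True
    then show ?thesis
      using DistS_quorum_of_guild_SendDistT[OF assms(1) M] by blast
  next
    case False
    have "receives_DistS_before_DistT tr i q" if "q \<in> Qi" for q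
      using receives_DistS_from_max_guild[OF i Qi(1,2) finite that] False Qi(2) that by blast
    then show ?thesis
      using i Qi(1) by blast
  qed
  then show ?thesis by (simp add: receives_DistS_before_DistT_def)
qed

end
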